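(* Let $\gamma\in[0,1]$, $\rho\in[0,1)$, and let $k:\mathbb{R}^3\times\mathbb{R}^3\to\mathbb{R}$ satisfy $$|k(v,v_* )|\lesssim\frac{1}{|v-v_*|(1+|v|+|v_*|)^{1-\gamma}}\exp\!\Big(-\frac{1-\rho}{4}\Big(|v-v_*|^2+\Big(\frac{|v|^2-|v_*|^2}{|v-v_*|}\Big)^2\Big)\Big).$$ Then for $0\le\alpha<(1-\rho)/2$, $$\int_{\mathbb{R}^3}\frac{1+|v_*|}{|v_*|}|k(v,v_* )|e^{-\alpha|v_*|^2}dv_*\lesssim e^{-\alpha|v|^2}\quad\text{for all }v\in\mathbb{R}^3.$$
   Context: $a\lesssim b$ means $a\le Cb$ for a constant $C\ge0$ independent of $v$. *)

theory Defs
  imports "HOL-Analysis.Analysis"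
begin

end

(*
  Write a = |v - w|, b = |w| and u = (|v|^2 - |w|^2) / a, so that |v|^2 = |w|^2 + u a.
  Completing the square gives
    -(1 - rho)/4 (a^2 + u^2) - alpha |w|^2 <= -alpha |v|^2 - delta a^2,
  with delta = (1 - rho)/4 - alpha/2 > 0, so the factor exp (-alpha |v|^2) leaves the integral.
  What remains, (1 + b)/(a b) exp (-delta a^2), is bounded by a multiple of Q a + Q b,
  where Q = inv_sq_quart, i.e. Q t = min (t^-2) (t^-4). The exponents -2 and -4 lie on
  either side of the dimension 3, so Q (|w - c|) is integrable over R^3 uniformly in c:
  cover it by a dyadic series of balls.
*)

theory Submission
  imports Defs
begin

text \<open>At \<open>t = 0\<close> the value is the junk value \<open>0\<close>, which is harmless on a null set.\<close>

definition inv_sq_quart :: "real \<Rightarrow> real" where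
  "inv_sq_quart t = 1 / (t\<^sup>2 * max 1 (t\<^sup>2))"

lemma borel_measurable_inv_sq_quart [measurable]: "inv_sq_quart \<in> borel_measurable borel"
  unfolding inv_sq_quart_def
  by (intro borel_measurable_divide borel_measurable_times borel_measurable_max) auto

lemma inv_sq_quart_nonneg [simp]: "0 \<le> inv_sq_quart t"
  by (simp add: inv_sq_quart_def)

lemma inv_sq_quart_le_one: "\<bar>t\<bar> \<le> 1 \<Longrightarrow> inv_sq_quart t = 1 / t\<^sup>2"
  by (simp add: inv_sq_quart_def abs_square_le_1)

lemma inv_sq_quart_ge_one: "1 \<le> \<bar>t\<bar> \<Longrightarrow> inv_sq_quart t = 1 / t ^ 4"
proof -
  assume "1 \<le> \<bar>t\<bar>"
  then have "1 \<le> t\<^sup>2" by (metis abs_le_square_iff abs_one power_one)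
  then show ?thesis by (simp add: inv_sq_quart_def power4_eq_xxxx power2_eq_square)
qed

lemma ex_dyadic_interval: "1 \<le> (t::real) \<Longrightarrow> \<exists>n. 2 ^ n \<le> t \<and> t < 2 ^ Suc n"
proof -
  assume "1 \<le> t"
  obtain N where "t < 2 ^ N" using real_arch_pow[of 2 t] by auto
  then show ?thesis
  proof (induction N)
    case (Suc N)
    then show ?case by (cases "t < 2 ^ N") (auto intro: exI[of _ N])
  qed (use \<open>1 \<le> t\<close> in simp)
qed

lemma inv_sq_quart_le_dyadic_series:
  fixes w c :: "'a::real_normed_vector"
  shows "ennreal (inv_sq_quart (dist w c))
    \<le> (\<Sum>n. ennreal (4 ^ Suc n) * indicator (cball c (1 / 2 ^ n)) w
          + ennreal (1 / 16 ^ n) * indicator (cball c (2 ^ Suc n)) w)"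
    (is "_ \<le> (\<Sum>n. ?f n)")
proof -
  define t where "t = dist w c"
  have "dist c w = t" by (simp add: t_def dist_commute)
  have term_le_series: "?f n \<le> (\<Sum>n. ?f n)" for n
    using sum_le_suminf[of ?f "{n}"] by (simp add: summableI)
  consider "t = 0" | "0 < t" "t < 1" | "1 \<le> t" using zero_le_dist t_def by fastforce
  then show ?thesis
  proof cases
    case 1
    then show ?thesis by (simp add: t_def[symmetric] inv_sq_quart_def)
  next
    case 2
    then obtain n where n: "2 ^ n \<le> 1 / t" "1 / t < 2 ^ Suc n"
      using ex_dyadic_interval[of "1 / t"] by auto
    have "t \<le> 1 / 2 ^ n" using n 2 by (simp add: field_simps)
    have "inv_sq_quart t = (1 / t)\<^sup>2" using 2 by (simp add: inv_sq_quart_le_one power_divide)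
    also have "\<dots> \<le> (2 ^ Suc n)\<^sup>2" using n 2 by (intro power_mono) auto
    also have "\<dots> = 4 ^ Suc n" by (simp add: power2_eq_square flip: power_mult_distrib)
    finally have "ennreal (inv_sq_quart t) \<le> ?f n"
      using \<open>dist c w = t\<close> \<open>t \<le> 1 / 2 ^ n\<close> by (simp add: ennreal_leI add_increasing2)
    then show ?thesis using term_le_series[of n] t_def by simp
  next
    case 3
    then obtain n where n: "2 ^ n \<le> t" "t < 2 ^ Suc n" using ex_dyadic_interval by auto
    have "(2 ^ n) ^ 4 \<le> t ^ 4" using n by (intro power_mono) auto
    then have "inv_sq_quart t \<le> 1 / (2 ^ n) ^ 4"
      using 3 by (simp add: inv_sq_quart_ge_one frac_le)
    also have "\<dots> = 1 / 16 ^ n" by (simp add: power_mult[symmetric] mult.commute[of n] power_mult)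
    finally have "ennreal (inv_sq_quart t) \<le> ?f n"
      using \<open>dist c w = t\<close> n by (simp add: ennreal_leI add_increasing)
    then show ?thesis using term_le_series[of n] t_def by simp
  qed
qed

lemma dyadic_coefficients_eq:
  "(4::real) ^ Suc n * (1 / 2 ^ n) ^ 3 + 1 / 16 ^ n * (2 ^ Suc n) ^ 3 = 12 * (1 / 2) ^ n"
proof -
  define x :: real where "x = 2 ^ n"
  have "x > 0" "4 ^ n = x\<^sup>2" "16 ^ n = x ^ 4" "(1 / 2) ^ n = 1 / x"
    by (simp_all add: x_def power_mult[symmetric] mult.commute[of n] power_mult power_divide)
  then show ?thesis by (simp add: x_def[symmetric] field_simps eval_nat_numeral)
qed

lemma nn_integral_inv_sq_quart_dist_le:
  fixes c :: "'a::euclidean_space"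
  assumes "DIM('a) = 3"
  shows "(\<integral>\<^sup>+ w. ennreal (inv_sq_quart (dist w c)) \<partial>lborel) \<le> ennreal (24 * unit_ball_vol 3)"
proof -
  define V where "V = unit_ball_vol 3"
  have "V \<ge> 0" by (simp add: V_def)
  have ball_vol: "emeasure lborel (cball c r) = ennreal (V * r ^ 3)" if "0 \<le> r" for r
    using emeasure_cball[OF that, of c] assms by (simp add: V_def)
  have meas: "(\<lambda>w. ennreal a * indicator (cball c r) w) \<in> borel_measurable lborel" for a r
    by (intro borel_measurable_times_ennreal borel_measurable_indicator borel_measurable_const) simp
  have "(\<integral>\<^sup>+ w. ennreal (inv_sq_quart (dist w c)) \<partial>lborel)
      \<le> (\<integral>\<^sup>+ w. (\<Sum>n. ennreal (4 ^ Suc n) * indicator (cball c (1 / 2 ^ n)) w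
          + ennreal (1 / 16 ^ n) * indicator (cball c (2 ^ Suc n)) w) \<partial>lborel)"
    by (intro nn_integral_mono inv_sq_quart_le_dyadic_series)
  also have "\<dots> = (\<Sum>n. ennreal (4 ^ Suc n) * emeasure lborel (cball c (1 / 2 ^ n))
          + ennreal (1 / 16 ^ n) * emeasure lborel (cball c (2 ^ Suc n)))"
    by (subst nn_integral_suminf[OF borel_measurable_add[OF meas meas]])
      (simp add: nn_integral_add[OF meas meas] nn_integral_cmult_indicator)
  also have "\<dots> = (\<Sum>n. ennreal (12 * V * (1 / 2) ^ n))"
  proof (rule suminf_cong)
    fix n
    have "ennreal (4 ^ Suc n) * emeasure lborel (cball c (1 / 2 ^ n))
        + ennreal (1 / 16 ^ n) * emeasure lborel (cball c (2 ^ Suc n))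
      = ennreal (V * (4 ^ Suc n * (1 / 2 ^ n) ^ 3 + 1 / 16 ^ n * (2 ^ Suc n) ^ 3))"
      using \<open>V \<ge> 0\<close> by (simp add: ball_vol distrib_left mult_ac flip: ennreal_mult ennreal_plus)
    then show "ennreal (4 ^ Suc n) * emeasure lborel (cball c (1 / 2 ^ n))
        + ennreal (1 / 16 ^ n) * emeasure lborel (cball c (2 ^ Suc n)) = ennreal (12 * V * (1 / 2) ^ n)"
      by (simp only: dyadic_coefficients_eq) (simp add: ac_simps)
  qed
  also have "\<dots> = ennreal (24 * V)"
    using suminf_geometric[of "1 / 2 :: real"] \<open>V \<ge> 0\<close>
    by (simp add: suminf_ennreal2 summable_geometric suminf_mult)
  finally show ?thesis by (simp add: V_def)
qed

lemma one_plus_sq_mult_exp_le: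
  fixes x \<delta> :: real
  assumes "0 \<le> x" "0 < \<delta>"
  shows "(1 + x)\<^sup>2 * exp (- \<delta> * x) \<le> 2 * (1 + 1 / \<delta>)\<^sup>2"
proof -
  have "1 + x \<le> (1 + 1 / \<delta>) * (1 + \<delta> * x)"
    using assms by (simp add: algebra_simps)
  then have "(1 + x)\<^sup>2 \<le> (1 + 1 / \<delta>)\<^sup>2 * (1 + \<delta> * x)\<^sup>2"
    using assms by (metis power_mono power_mult_distrib add_nonneg_nonneg zero_le_one)
  also have "\<dots> \<le> (1 + 1 / \<delta>)\<^sup>2 * (2 * exp (\<delta> * x))"
    using exp_lower_Taylor_quadratic[of "\<delta> * x"] assms
    by (intro mult_left_mono) (simp_all add: power2_eq_square algebra_simps)
  finally show ?thesis
    by (simp add: exp_minus field_simps)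
qed

lemma inverse_sq_le_inv_sq_quart_plus_one:
  assumes "0 < t"
  shows "1 / t\<^sup>2 \<le> inv_sq_quart t + 1"
proof (cases "t \<le> 1")
  case False
  then have "1 \<le> t\<^sup>2" by (simp add: one_le_power)
  then show ?thesis by (simp add: divide_le_eq_1 add_increasing)
qed (simp add: inv_sq_quart_le_one abs_of_pos assms)

lemma weighted_gaussian_le_inv_sq_quart:
  fixes a b \<delta> :: real
  assumes "0 < a" "0 < b" "0 < \<delta>"
  shows "(1 + b) / (a * b) * exp (- \<delta> * a\<^sup>2)
    \<le> 2 * (1 + 1 / \<delta>)\<^sup>2 * (inv_sq_quart a + inv_sq_quart b)"
proof -
  define G where "G = exp (- \<delta> * a\<^sup>2)"
  define M where "M = 2 * (1 + 1 / \<delta>)\<^sup>2"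
  have "0 < G" "G \<le> 1" using assms by (simp_all add: G_def)
  have "2 \<le> M" using assms by (simp add: M_def one_le_power)
  have near: "G * (1 + 1 / a\<^sup>2) \<le> M * inv_sq_quart a"
  proof -
    have "G * (1 + 1 / a\<^sup>2) = G * (1 + a\<^sup>2) * max 1 (a\<^sup>2) * inv_sq_quart a"
      using assms by (simp add: inv_sq_quart_def field_simps)
    also have "G * (1 + a\<^sup>2) * max 1 (a\<^sup>2) \<le> G * (1 + a\<^sup>2) * (1 + a\<^sup>2)"
      using \<open>0 < G\<close> by (intro mult_left_mono) auto
    also have "\<dots> \<le> M"
      using one_plus_sq_mult_exp_le[of "a\<^sup>2" \<delta>] assms
      by (simp add: G_def M_def power2_eq_square mult_ac)
    finally show ?thesis
      by (simp add: mult_right_mono)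
  qed
  have "(1 + b) / (a * b) = (1 / a) * (1 / b) + 1 / a"
    using assms by (simp add: field_simps)
  also have "\<dots> \<le> ((1 / a)\<^sup>2 + (1 / b)\<^sup>2) / 2 + (1 + (1 / a)\<^sup>2) / 2"
    using sum_squares_ge_zero[of "1 / a - 1 / b" 0] sum_squares_ge_zero[of "1 / a - 1" 0]
    by (simp add: power2_eq_square algebra_simps add_divide_distrib)
  also have "\<dots> \<le> (1 + 1 / a\<^sup>2) + inv_sq_quart b / 2"
    using inverse_sq_le_inv_sq_quart_plus_one[OF \<open>0 < b\<close>] by (simp add: power_divide add_divide_distrib)
  finally have "(1 + b) / (a * b) * G \<le> (1 + 1 / a\<^sup>2 + inv_sq_quart b / 2) * G"
    by (rule mult_right_mono) (use \<open>0 < G\<close> in simp)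
  also have "\<dots> = G * (1 + 1 / a\<^sup>2) + G * (inv_sq_quart b / 2)"
    by (simp add: algebra_simps)
  also have "\<dots> \<le> M * inv_sq_quart a + inv_sq_quart b / 2"
    using near \<open>0 < G\<close> \<open>G \<le> 1\<close> by (intro add_mono mult_left_le_one_le) auto
  also have "\<dots> \<le> M * (inv_sq_quart a + inv_sq_quart b)"
    using mult_right_mono[OF \<open>2 \<le> M\<close> inv_sq_quart_nonneg[of b]] inv_sq_quart_nonneg[of b]
    unfolding distrib_left by linarith
  finally show ?thesis by (simp add: G_def M_def)
qed

lemma gaussian_exponent_shift:
  fixes a u p q \<alpha> \<beta> :: real
  assumes "0 \<le> \<alpha>" "\<alpha> \<le> 2 * \<beta>" "p - q = u * a"
  shows "- \<beta> * (a\<^sup>2 + u\<^sup>2) - \<alpha> * q \<le> - \<alpha> * p - (\<beta> - \<alpha> / 2) * a\<^sup>2"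
proof -
  have "(- \<alpha> * p - (\<beta> - \<alpha> / 2) * a\<^sup>2) - (- \<beta> * (a\<^sup>2 + u\<^sup>2) - \<alpha> * q)
      = \<alpha> / 2 * (u - a)\<^sup>2 + (\<beta> - \<alpha> / 2) * u\<^sup>2"
    using assms(3) by (simp add: power2_eq_square algebra_simps)
  moreover have "0 \<le> \<alpha> / 2 * (u - a)\<^sup>2 + (\<beta> - \<alpha> / 2) * u\<^sup>2"
    using assms(1,2) by simp
  ultimately show ?thesis by linarith
qed

lemma kernel_integrand_le:
  fixes v w :: "'a::real_normed_vector"
  assumes "w \<noteq> v" "w \<noteq> 0" "0 \<le> \<alpha>" "\<alpha> < 2 * \<beta>" "0 \<le> C" "1 \<le> P"
    and K: "K \<le> C * (1 / (norm (v - w) * P))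
      * exp (- \<beta> * ((norm (v - w))\<^sup>2 + ((norm v ^ 2 - norm w ^ 2) / norm (v - w))\<^sup>2))"
  shows "(1 + norm w) / norm w * K * exp (- \<alpha> * (norm w)\<^sup>2)
    \<le> C * (2 * (1 + 1 / (\<beta> - \<alpha> / 2))\<^sup>2) * exp (- \<alpha> * (norm v)\<^sup>2)
      * (inv_sq_quart (dist w v) + inv_sq_quart (norm w))"
proof -
  define a where "a = norm (v - w)"
  define b where "b = norm w"
  define u where "u = (norm v ^ 2 - norm w ^ 2) / a"
  define \<delta> where "\<delta> = \<beta> - \<alpha> / 2"
  have "0 < a" "0 < b" "0 < \<delta>" using assms by (simp_all add: a_def b_def \<delta>_def)
  have "1 / (a * P) \<le> 1 / a"
    using \<open>0 < a\<close> \<open>1 \<le> P\<close> by (simp add: frac_le)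
  then have "C * (1 / (a * P)) * exp (- \<beta> * (a\<^sup>2 + u\<^sup>2)) \<le> C * (1 / a) * exp (- \<beta> * (a\<^sup>2 + u\<^sup>2))"
    using \<open>0 \<le> C\<close> by (intro mult_right_mono mult_left_mono) simp_all
  then have "K \<le> C * (1 / a) * exp (- \<beta> * (a\<^sup>2 + u\<^sup>2))"
    using K[folded a_def, folded u_def] by linarith
  then have "(1 + b) / b * K * exp (- \<alpha> * b\<^sup>2)
      \<le> (1 + b) / b * (C * (1 / a) * exp (- \<beta> * (a\<^sup>2 + u\<^sup>2))) * exp (- \<alpha> * b\<^sup>2)"
    using \<open>0 < b\<close> by (intro mult_right_mono mult_left_mono) auto
  also have "\<dots> = C * ((1 + b) / (a * b)) * (exp (- \<beta> * (a\<^sup>2 + u\<^sup>2)) * exp (- \<alpha> * b\<^sup>2))"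
    by (simp add: field_simps)
  also have "\<dots> \<le> C * ((1 + b) / (a * b)) * (exp (- \<alpha> * (norm v)\<^sup>2) * exp (- \<delta> * a\<^sup>2))"
  proof -
    have "(norm v)\<^sup>2 - b\<^sup>2 = u * a"
      using \<open>0 < a\<close> by (simp add: u_def b_def)
    then have "- \<beta> * (a\<^sup>2 + u\<^sup>2) - \<alpha> * b\<^sup>2 \<le> - \<alpha> * (norm v)\<^sup>2 - \<delta> * a\<^sup>2"
      using gaussian_exponent_shift[of \<alpha> \<beta>] assms by (simp add: \<delta>_def)
    then have "- \<beta> * (a\<^sup>2 + u\<^sup>2) + - \<alpha> * b\<^sup>2 \<le> - \<alpha> * (norm v)\<^sup>2 + - \<delta> * a\<^sup>2"
      by linarith
    then show ?thesis
      using \<open>0 \<le> C\<close> \<open>0 < a\<close> \<open>0 < b\<close> by (intro mult_left_mono) (simp_all flip: exp_add)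
  qed
  also have "\<dots> = C * exp (- \<alpha> * (norm v)\<^sup>2) * ((1 + b) / (a * b) * exp (- \<delta> * a\<^sup>2))"
    by (simp add: mult_ac)
  also have "\<dots> \<le> C * exp (- \<alpha> * (norm v)\<^sup>2) * (2 * (1 + 1 / \<delta>)\<^sup>2 * (inv_sq_quart a + inv_sq_quart b))"
    using weighted_gaussian_le_inv_sq_quart[OF \<open>0 < a\<close> \<open>0 < b\<close> \<open>0 < \<delta>\<close>] \<open>0 \<le> C\<close>
    by (intro mult_left_mono) auto
  finally show ?thesis
    by (simp add: a_def b_def \<delta>_def dist_norm norm_minus_commute mult_ac)
qed

lemma nn_integral_inv_sq_quart_two_centres_le:
  fixes v :: "'a::euclidean_space"
  assumes "DIM('a) = 3" "0 \<le> c"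
  shows "(\<integral>\<^sup>+ w. ennreal (c * (inv_sq_quart (dist w v) + inv_sq_quart (norm w))) \<partial>lborel)
    \<le> ennreal (c * (48 * unit_ball_vol 3))"
proof -
  have meas: "(\<lambda>w. ennreal (inv_sq_quart (dist w v))) \<in> borel_measurable lborel"
    "(\<lambda>w. ennreal (inv_sq_quart (norm w))) \<in> borel_measurable lborel"
    by measurable
  have "(\<integral>\<^sup>+ w. ennreal (c * (inv_sq_quart (dist w v) + inv_sq_quart (norm w))) \<partial>lborel)
      = ennreal c * ((\<integral>\<^sup>+ w. ennreal (inv_sq_quart (dist w v)) \<partial>lborel)
          + (\<integral>\<^sup>+ w. ennreal (inv_sq_quart (norm (w :: 'a))) \<partial>lborel))"
    using assms(2)
    by (simp add: ennreal_mult nn_integral_cmult[OF borel_measurable_add[OF meas]]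
        nn_integral_add[OF meas])
  also have "\<dots> \<le> ennreal c * (ennreal (24 * unit_ball_vol 3) + ennreal (24 * unit_ball_vol 3))"
    using nn_integral_inv_sq_quart_dist_le[OF assms(1), of v]
      nn_integral_inv_sq_quart_dist_le[OF assms(1), of 0]
    by (intro mult_left_mono add_mono) auto
  also have "\<dots> = ennreal (c * (48 * unit_ball_vol 3))"
    using assms(2) by (simp add: ennreal_mult flip: distrib_right)
  finally show ?thesis .
qed

theorem lemma2p1:
  fixes k :: "real^3 \<Rightarrow> real^3 \<Rightarrow> real"
    and \<gamma> \<rho> \<alpha> :: real
  assumes "0 \<le> \<gamma>" "\<gamma> \<le> 1" "0 \<le> \<rho>" "\<rho> < 1"
    and kbound: "\<exists>C\<ge>0. \<forall>v w. v \<noteq> w \<longrightarrow>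
        \<bar>k v w\<bar> \<le> C * (1 / (norm (v - w) * (1 + norm v + norm w) powr (1 - \<gamma>)))
          * exp (- ((1 - \<rho>) / 4) * ((norm (v - w))\<^sup>2
                 + ((norm v ^ 2 - norm w ^ 2) / norm (v - w))\<^sup>2))"
    and "0 \<le> \<alpha>" "\<alpha> < (1 - \<rho>) / 2"
  shows "\<exists>C'\<ge>0. \<forall>v::real^3.
     (\<integral>\<^sup>+ w. ennreal ((1 + norm w) / norm w * \<bar>k v w\<bar> * exp (- \<alpha> * (norm w)\<^sup>2)) \<partial>lborel)
       \<le> ennreal (C' * exp (- \<alpha> * (norm v)\<^sup>2))"
proof -
  obtain C where "0 \<le> C" and C: "\<forall>v w. v \<noteq> w \<longrightarrow>
        \<bar>k v w\<bar> \<le> C * (1 / (norm (v - w) * (1 + norm v + norm w) powr (1 - \<gamma>)))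
          * exp (- ((1 - \<rho>) / 4) * ((norm (v - w))\<^sup>2
                 + ((norm v ^ 2 - norm w ^ 2) / norm (v - w))\<^sup>2))"
    using kbound by blast
  define M where "M = C * (2 * (1 + 1 / ((1 - \<rho>) / 4 - \<alpha> / 2))\<^sup>2)"
  have "0 \<le> M" using \<open>0 \<le> C\<close> by (simp add: M_def)
  have pointwise: "ennreal ((1 + norm w) / norm w * \<bar>k v w\<bar> * exp (- \<alpha> * (norm w)\<^sup>2))
      \<le> ennreal (M * exp (- \<alpha> * (norm v)\<^sup>2) * (inv_sq_quart (dist w v) + inv_sq_quart (norm w)))"
    if "w \<noteq> v" for v w :: "real^3"
  proof (cases "w = 0")
    case False
    have "1 \<le> (1 + norm v + norm w) powr (1 - \<gamma>)"
      using assms by (intro ge_one_powr_ge_zero) auto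
    moreover have "\<alpha> < 2 * ((1 - \<rho>) / 4)"
      using assms by simp
    moreover note C[rule_format, OF that[symmetric]]
    ultimately show ?thesis
      unfolding M_def
      by (intro ennreal_leI kernel_integrand_le[OF that False \<open>0 \<le> \<alpha>\<close> _ \<open>0 \<le> C\<close>])
  qed simp
  show ?thesis
  proof (intro exI conjI allI)
    fix v :: "real^3"
    have "(\<integral>\<^sup>+ w. ennreal ((1 + norm w) / norm w * \<bar>k v w\<bar> * exp (- \<alpha> * (norm w)\<^sup>2)) \<partial>lborel)
        \<le> (\<integral>\<^sup>+ w. ennreal (M * exp (- \<alpha> * (norm v)\<^sup>2)
              * (inv_sq_quart (dist w v) + inv_sq_quart (norm w))) \<partial>lborel)"
      using AE_lborel_singleton[of v] pointwise by (intro nn_integral_mono_AE) auto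
    also have "\<dots> \<le> ennreal (M * exp (- \<alpha> * (norm v)\<^sup>2) * (48 * unit_ball_vol 3))"
      using \<open>0 \<le> M\<close> by (intro nn_integral_inv_sq_quart_two_centres_le) auto
    finally show "(\<integral>\<^sup>+ w. ennreal ((1 + norm w) / norm w * \<bar>k v w\<bar> * exp (- \<alpha> * (norm w)\<^sup>2)) \<partial>lborel)
        \<le> ennreal (M * (48 * unit_ball_vol 3) * exp (- \<alpha> * (norm v)\<^sup>2))"
      by (simp add: mult_ac)
  qed (use \<open>0 \<le> M\<close> in simp)
qed

end
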